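(* Let $p$ be a prime and let $n\in\mathcal{M}_p^{(2)}$. If $q$ is a prime with $q<p$ and $q\mid n$, then $q\in\{2,3,7,43\}$.
   Context: For positive integers $k,n$ let $S_k(n)=\sum_{i=1}^{n} i^k$. For an integer $a$, $\mathcal{M}_a$ denotes the set of positive integers $n$ such that $S_n(n)\equiv a\pmod{n}$. For a prime $p$, $\mathcal{M}_p^{(2)}=\{n\in\mathcal{M}_p : p^2\mid n,\ p^3\nmid n\}$. *)

theory Defs
  imports "HOL-Number_Theory.Number_Theory"
begin

definition S :: "nat \<Rightarrow> nat \<Rightarrow> int" where
  "S k n = (\<Sum>i=1..n. int i ^ k)"

definition M :: "int \<Rightarrow> nat set" where
  "M a = {n. n > 0 \<and> [S n n = a] (mod int n)}"

definition M2 :: "nat \<Rightarrow> nat set" where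
  "M2 p = {n \<in> M (int p). p^2 dvd n \<and> \<not> p^3 dvd n}"

end

theory Submission
  imports Defs "HOL-Number_Theory.Residue_Primitive_Roots"
begin

text \<open>
  Reducing \<open>S_n(n) \<equiv> p\<close> modulo \<open>q\<close> and cutting
  \<open>{1..n}\<close> into \<open>n/q\<close> blocks of length \<open>q\<close> shows that \<open>q\<close> does not divide
  \<open>(n/q) \<cdot> \<Sum>{j^n | 0 < j < q}\<close>. Hence \<open>q\<^sup>2 \<nmid> n\<close>, and \<open>(q - 1) | n\<close> because otherwise
  multiplying by \<open>g^n\<close> for a primitive root \<open>g\<close> shows the power sum vanishes modulo \<open>q\<close>.
  So \<open>q - 1\<close> is squarefree with prime factors of the same kind, and by induction
  \<open>q - 1 | 2\<cdot>3\<cdot>7\<cdot>43 = 1806\<close>; the only primes \<open>q\<close> with \<open>q - 1 | 1806\<close> are 2, 3, 7, 43.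
\<close>

lemma sum_powers_multiple_cong:
  fixes k q e :: nat
  shows "[(\<Sum>i=1..k*q. i^e) = k * (\<Sum>j=1..q. j^e)] (mod q)"
proof (induction k)
  case 0
  then show ?case by simp
next
  case (Suc k)
  have "(\<Sum>i=1..Suc k*q. i^e) = (\<Sum>i=1..k*q + q. i^e)" by (simp add: add.commute)
  also have "\<dots> = (\<Sum>i=1..k*q. i^e) + (\<Sum>i=k*q+1..k*q+q. i^e)"
    by (rule sum.ub_add_nat) simp
  also have "(\<Sum>i=k*q+1..k*q+q. i^e) = (\<Sum>j=1..q. (j + k*q)^e)"
    using sum.shift_bounds_cl_nat_ivl[of "\<lambda>i. i^e" 1 "k*q" q] by (simp add: add.commute)
  finally have split: "(\<Sum>i=1..Suc k*q. i^e) = (\<Sum>i=1..k*q. i^e) + (\<Sum>j=1..q. (j + k*q)^e)" .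
  have "[(\<Sum>j=1..q. (j + k*q)^e) = (\<Sum>j=1..q. j^e)] (mod q)"
  proof (intro cong_sum cong_pow)
    show "[j + k*q = j] (mod q)" for j by (simp add: cong_def)
  qed
  with Suc.IH have "[(\<Sum>i=1..k*q. i^e) + (\<Sum>j=1..q. (j + k*q)^e)
                     = k * (\<Sum>j=1..q. j^e) + (\<Sum>j=1..q. j^e)] (mod q)"
    by (rule cong_add)
  then show ?case using split by (simp add: algebra_simps)
qed

lemma sum_powers_mult_unit_cong:
  fixes q g e :: nat
  assumes "prime q" "coprime q g"
  shows "[g^e * (\<Sum>j\<in>{1..<q}. j^e) = (\<Sum>j\<in>{1..<q}. j^e)] (mod q)"
proof -
  define f where "f = (\<lambda>j. g*j mod q)"
  have "\<not> q dvd g"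
  proof
    assume "q dvd g"
    with assms show False by (simp add: coprime_absorb_left)
  qed
  have inj: "inj_on f {1..<q}"
  proof
    fix a b assume a: "a \<in> {1..<q}" and b: "b \<in> {1..<q}" and "f a = f b"
    then have "[g*a = g*b] (mod q)" by (simp add: f_def cong_def)
    then have "[a = b] (mod q)"
      using assms(2) cong_mult_lcancel_nat by (metis coprime_commute)
    then show "a = b" using a b by (simp add: cong_def)
  qed
  have "f ` {1..<q} \<subseteq> {1..<q}"
  proof
    fix x assume "x \<in> f ` {1..<q}"
    then obtain j where j: "j \<in> {1..<q}" "x = g*j mod q" by (auto simp: f_def)
    then have "\<not> q dvd j" by (auto dest: dvd_imp_le)
    with \<open>\<not> q dvd g\<close> have "\<not> q dvd g*j" using assms(1) prime_dvd_mult_iff by blast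
    then show "x \<in> {1..<q}" using j by (simp add: dvd_eq_mod_eq_0)
  qed
  then have perm: "f ` {1..<q} = {1..<q}" using endo_inj_surj[OF _ _ inj] by simp
  have "g^e * (\<Sum>j\<in>{1..<q}. j^e) = (\<Sum>j\<in>{1..<q}. (g*j)^e)"
    by (simp add: power_mult_distrib sum_distrib_left)
  also have "[\<dots> = (\<Sum>j\<in>{1..<q}. (f j)^e)] (mod q)"
    by (intro cong_sum) (simp add: f_def cong_def power_mod)
  also have "(\<Sum>j\<in>{1..<q}. (f j)^e) = (\<Sum>j\<in>{1..<q}. j^e)"
    using sum.reindex[OF inj, of "\<lambda>j. j^e"] perm by simp
  finally show ?thesis .
qed

lemma prime_dvd_sum_powers:
  fixes q e :: nat
  assumes "prime q" "\<not> (q - 1) dvd e"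
  shows "q dvd (\<Sum>j\<in>{1..<q}. j^e)"
proof (rule ccontr)
  assume "\<not> q dvd (\<Sum>j\<in>{1..<q}. j^e)"
  then have "coprime (\<Sum>j\<in>{1..<q}. j^e) q"
    using assms(1) by (metis coprime_commute prime_imp_coprime)
  obtain g where "residue_primroot q g"
    using prime_primitive_root_exists[OF prime_gt_1_nat[OF assms(1)] assms(1)] by blast
  then have "coprime q g" and ord: "ord q g = q - 1"
    using assms(1) by (auto simp: residue_primroot_def totient_prime)
  then have "[g^e * (\<Sum>j\<in>{1..<q}. j^e) = 1 * (\<Sum>j\<in>{1..<q}. j^e)] (mod q)"
    using sum_powers_mult_unit_cong[OF assms(1)] by simp
  with \<open>coprime (\<Sum>j\<in>{1..<q}. j^e) q\<close> have "[g^e = 1] (mod q)"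
    using cong_mult_rcancel_nat by blast
  then have "ord q g dvd e" using ord_divides by blast
  with ord assms(2) show False by simp
qed

lemma prime_not_dvd_sum_powers:
  fixes q n e :: nat
  assumes q: "prime q" and "q dvd n" and "e > 0"
    and not_dvd: "\<not> q dvd (\<Sum>i=1..n. i^e)"
  shows "(q - 1) dvd e" and "\<not> q^2 dvd n"
proof -
  obtain k where k: "n = k*q" using \<open>q dvd n\<close> by (metis dvd_def mult.commute)
  have "{1..q} = insert q {1..<q}" using prime_gt_1_nat[OF q] by auto
  then have full_block: "(\<Sum>j=1..q. j^e) = (\<Sum>j\<in>{1..<q}. j^e) + q^e" by simp
  have not_dvd_blocks: "\<not> q dvd k * (\<Sum>j=1..q. j^e)"
    using not_dvd sum_powers_multiple_cong[where k=k and q=q and e=e] k by (simp add: cong_dvd_iff)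
  show "(q - 1) dvd e"
  proof (rule ccontr)
    assume "\<not> (q - 1) dvd e"
    then have "q dvd (\<Sum>j=1..q. j^e)"
      using prime_dvd_sum_powers[OF q] full_block \<open>e > 0\<close> by (simp add: dvd_power)
    with not_dvd_blocks show False by simp
  qed
  show "\<not> q^2 dvd n"
  proof
    assume "q^2 dvd n"
    then have "q dvd k" using k prime_gt_1_nat[OF q] by (simp add: power2_eq_square)
    with not_dvd_blocks show False by simp
  qed
qed

lemma dvd_1806_cases:
  fixes d :: nat
  assumes "d dvd 1806"
  shows "d \<in> {1,2,3,6,7,14,21,42,43,86,129,258,301,602,903,1806}"
proof -
  have prime_dvd_cases: "d = 1 \<or> d = r" if "prime r" "d dvd r" for d r :: nat
    using that by (simp add: prime_nat_iff)
  have "d dvd 2 * (3 * (7 * 43))" using assms by simp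
  then obtain a b where "d = a * b" "a dvd 2" "b dvd 3 * (7 * 43)"
    using division_decomp by blast
  moreover from this(3) obtain c e where "b = c * e" "c dvd 3" "e dvd 7 * 43"
    using division_decomp by blast
  moreover from this(3) obtain f g where "e = f * g" "f dvd 7" "g dvd 43"
    using division_decomp by blast
  moreover have "prime (2::nat)" "prime (3::nat)" "prime (7::nat)" "prime (43::nat)"
    by simp_all
  ultimately have "a \<in> {1,2}" "c \<in> {1,3}" "f \<in> {1,7}" "g \<in> {1,43}"
    "d = a * (c * (f * g))"
    using prime_dvd_cases by blast+
  then show ?thesis by auto
qed

lemma prime_pred_dvd_1806:
  fixes q :: nat
  assumes "prime q" "(q - 1) dvd 1806"
  shows "q \<in> {2,3,7,43}"
proof -
  obtain d where "q = Suc d" using prime_gt_0_nat[OF assms(1)] gr0_implies_Suc by blast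
  then have candidates: "q \<in> {2,3,4,7,8,15,22,43,44,87,130,259,302,603,904,1807}"
    using dvd_1806_cases[OF assms(2)] by auto
  have no_factor: "\<not> k dvd q" if "1 < k" "k < q" for k
    using assms(1) that prime_nat_iff by auto
  show ?thesis
    using candidates no_factor[of 2] no_factor[of 3] no_factor[of 7] no_factor[of 13] by auto
qed

lemma squarefree_dvd_1806:
  fixes m :: nat
  assumes "m > 0"
    and "\<And>r. prime r \<Longrightarrow> r dvd m \<Longrightarrow> r \<in> {2,3,7,43} \<and> \<not> r^2 dvd m"
  shows "m dvd 1806"
proof (rule multiplicity_le_imp_dvd)
  show "m \<noteq> 0" using assms(1) by simp
  fix r :: nat assume r: "prime r"
  show "multiplicity r m \<le> multiplicity r 1806"
  proof (cases "r dvd m")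
    case False
    then show ?thesis by (simp add: not_dvd_imp_multiplicity_0)
  next
    case True
    with assms(2) r have "r \<in> {2,3,7,43}" "\<not> r^2 dvd m" by auto
    then have "r dvd 1806" "\<not> r^2 dvd m" by auto
    then show ?thesis
      using power_dvd_iff_le_multiplicity[where p=r and n=2 and x=m]
        power_dvd_iff_le_multiplicity[where p=r and n=1 and x=1806]
        assms(1) prime_gt_1_nat[OF r] by auto
  qed
qed

lemma closed_prime_divisors_in_2_3_7_43:
  fixes n p :: nat
  assumes closed: "\<And>r. prime r \<Longrightarrow> r < p \<Longrightarrow> r dvd n \<Longrightarrow> (r - 1) dvd n \<and> \<not> r^2 dvd n"
  shows "prime q \<Longrightarrow> q < p \<Longrightarrow> q dvd n \<Longrightarrow> q \<in> {2,3,7,43}"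
proof (induction q rule: less_induct)
  case (less q)
  then have "(q - 1) dvd n" using closed by blast
  have "q - 1 > 0" using prime_gt_1_nat[OF \<open>prime q\<close>] by simp
  have "(q - 1) dvd 1806"
  proof (rule squarefree_dvd_1806[OF \<open>q - 1 > 0\<close>])
    fix r assume r: "prime r" "r dvd q - 1"
    have "r \<le> q - 1" using dvd_imp_le[OF r(2) \<open>q - 1 > 0\<close>] .
    then have "r < q" "r < p" using \<open>q - 1 > 0\<close> \<open>q < p\<close> by linarith+
    moreover have "r dvd n" using r(2) \<open>(q - 1) dvd n\<close> by (rule dvd_trans)
    ultimately have "r \<in> {2,3,7,43}" and "\<not> r^2 dvd n"
      using less.IH[of r] closed[of r] r(1) by blast+
    then show "r \<in> {2,3,7,43} \<and> \<not> r^2 dvd q - 1"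
      using \<open>(q - 1) dvd n\<close> dvd_trans by blast
  qed
  then show ?case using prime_pred_dvd_1806 \<open>prime q\<close> by blast
qed

theorem mainTheorem5:
  fixes p q n :: nat
  assumes "prime p" and "n \<in> M2 p" and "prime q" and "q < p" and "q dvd n"
  shows "q \<in> {2, 3, 7, 43}"
proof -
  have "n > 0" and "[S n n = int p] (mod int n)"
    using assms(2) by (auto simp: M2_def M_def)
  moreover have "S n n = int (\<Sum>i=1..n. i^n)" by (simp add: S_def)
  ultimately have sum_cong: "[(\<Sum>i=1..n. i^n) = p] (mod n)"
    by (metis cong_int_iff)
  have "(r - 1) dvd n \<and> \<not> r^2 dvd n" if r: "prime r" "r < p" "r dvd n" for r
  proof -
    have "\<not> r dvd p"
      using r assms(1) prime_gt_1_nat[OF r(1)] by (auto simp: prime_nat_iff)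
    moreover have "[(\<Sum>i=1..n. i^n) = p] (mod r)"
      using sum_cong r(3) by (rule cong_dvd_modulus_nat)
    ultimately have "\<not> r dvd (\<Sum>i=1..n. i^n)"
      using cong_dvd_iff by blast
    then show ?thesis
      using prime_not_dvd_sum_powers[OF r(1) r(3) \<open>n > 0\<close>] by blast
  qed
  then show ?thesis
    using closed_prime_divisors_in_2_3_7_43 assms(3-5) by blast
qed

end
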